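(* Let $n\ge 2$, $0<p<1$, and let $\{V^{(h)}\}_{h\ge 0}$ be a homogeneous Markov chain on $\mathcal V=\{v_1,\dots,v_n\}$ with transition matrix $Q$ given by $$Q_{ij}=\Pr[V^{(h)}=v_j\mid V^{(h-1)}=v_i]=\frac{1-p}{1-p^n}\,p^{\,(j-i-1)\bmod n},\qquad 1\le i,j\le n,$$ (so row $i$ is $\frac{1-p}{1-p^n}(\dots,p^{n-1},1,p,p^2,\dots)$ with the entry $1$ in column $i+1$ cyclically). Let $\pi^{(h)}$ be the probability vector of $V^{(h)}$ (with arbitrary initial distribution $\pi^{(0)}$), and let $\pi^{(\infty)}=(1/n,\dots,1/n)^\top$. Then $\pi^{(h)}\to\pi^{(\infty)}$ as $h\to\infty$, and for all $h\ge 0$, $$\|\pi^{(h)}-\pi^{(\infty)}\|_1\le \sqrt n\,|\lambda_1|^h,\qquad\text{where } |\lambda_1|=\frac{1-p}{\sqrt{1+p^2-2p\cos\frac{2\pi}{n}}}.$$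
   Context: $\|\cdot\|_1$ is the $\ell_1$ norm. This chain describes the sequence of non-skipped nodes on a fixed logical ring where each node is independently skipped with probability $p$. *)

theory Defs
  imports Complex_Main
begin

text \<open>States v_1..v_n are represented by indices 0..n-1 (0-based).
  Transition matrix Q i j = (1-p)/(1-p^n) * p^((j - i - 1) mod n).\<close>
definition skipQ :: "nat \<Rightarrow> real \<Rightarrow> nat \<Rightarrow> nat \<Rightarrow> real" where
  "skipQ n p i j = (1 - p) / (1 - p ^ n) * p ^ nat ((int j - int i - 1) mod int n)"

fun dist_at :: "nat \<Rightarrow> real \<Rightarrow> (nat \<Rightarrow> real) \<Rightarrow> nat \<Rightarrow> nat \<Rightarrow> real" where
  "dist_at n p pi0 0 j = pi0 j"
| "dist_at n p pi0 (Suc h) j = (\<Sum>i<n. dist_at n p pi0 h i * skipQ n p i j)"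

end

theory Submission
  imports Defs "HOL-Analysis.Analysis"
begin

(* Write x_h = pi^(h) - pi^(inf). Each row of Q is the previous one shifted cyclically by one place,
   so Q(i, j+1) - p Q(i, j) = (1 - p) [i = j], and the deviations satisfy the cyclic recurrence
   x_(h+1)(j+1) - p x_(h+1)(j) = (1 - p) x_h(j). The discrete Fourier transform diagonalises it: the
   k-th coefficient is multiplied by (1 - p) w^k / (1 - p w^k), w = exp(2 pi i / n), whose modulus
   is at most |lambda_1| for k <> 0, while the coefficient k = 0 is the total mass of x_h, which is
   zero. By Parseval the Euclidean norm of x_h is at most |lambda_1|^h times that of x_0, which is at
   most 1, and Cauchy-Schwarz converts this into the l1 bound. *)

lemma skipQ_shift:
  assumes n: "0 < n" and pn: "p ^ n \<noteq> 1" and i: "i < n" and j: "j < n"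
  shows "skipQ n p i ((j + 1) mod n) - p * skipQ n p i j = (if i = j then 1 - p else 0)"
proof -
  define C where "C = (1 - p) / (1 - p ^ n)"
  have skipQ_C: "skipQ n p i k = C * p ^ nat ((int k - int i - 1) mod int n)" for k
    unfolding skipQ_def C_def ..
  have shift: "(int ((j + 1) mod n) - int i - 1) mod int n = (int j - int i) mod int n"
  proof (cases "j + 1 < n")
    case False
    then have "j + 1 = n" using j by simp
    then have "int ((j + 1) mod n) - int i - 1 = (int j - int i) + (-1) * int n" by simp
    then show ?thesis by (simp only: mod_mult_self1)
  qed simp
  show ?thesis
  proof (cases "i = j")
    case True
    have "(int j - int i - 1) mod int n = int n - 1"
      using True n zmod_minus1[of "int n"] by simp
    then have "nat ((int j - int i - 1) mod int n) = n - 1" by simp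
    then have "skipQ n p i ((j + 1) mod n) - p * skipQ n p i j = C - C * (p * p ^ (n - 1))"
      unfolding skipQ_C shift using True by simp
    also have "\<dots> = C * (1 - p ^ n)"
      using n by (cases n) (simp_all add: algebra_simps)
    also have "\<dots> = 1 - p" using pn by (simp add: C_def)
    finally show ?thesis using True by simp
  next
    case False
    define e where "e = (int j - int i) mod int n"
    have e: "0 < e" "e < int n"
    proof -
      have "e \<noteq> 0"
      proof
        assume "e = 0"
        then have "int n dvd int j - int i" unfolding e_def by (simp add: mod_eq_0_iff_dvd)
        then show False using False i j dvd_imp_le_int[of "int j - int i" "int n"] by auto
      qed
      moreover have "0 \<le> e" "e < int n" using n unfolding e_def by simp_all
      ultimately show "0 < e" "e < int n" by simp_all
    qed
    have "(int j - int i - 1) mod int n = (e - 1) mod int n"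
      unfolding e_def by (simp add: mod_diff_left_eq)
    also have "\<dots> = e - 1" using e by simp
    finally have "nat ((int j - int i - 1) mod int n) = nat (e - 1)" by simp
    moreover have "nat e = Suc (nat (e - 1))" using e by simp
    ultimately show ?thesis unfolding skipQ_C shift e_def[symmetric] using False by simp
  qed
qed

lemma dist_at_shift:
  assumes "0 < n" and "p ^ n \<noteq> 1" and j: "j < n"
  shows "(dist_at n p pi0 (Suc h) ((j + 1) mod n) - c) - p * (dist_at n p pi0 (Suc h) j - c)
         = (1 - p) * (dist_at n p pi0 h j - c)"
proof -
  have "dist_at n p pi0 (Suc h) ((j + 1) mod n) - p * dist_at n p pi0 (Suc h) j
     = (\<Sum>i<n. dist_at n p pi0 h i * (skipQ n p i ((j + 1) mod n) - p * skipQ n p i j))"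
    by (simp add: sum_distrib_left sum_subtractf algebra_simps)
  also have "\<dots> = (\<Sum>i<n. dist_at n p pi0 h i * (if i = j then 1 - p else 0))"
    using skipQ_shift[OF assms(1,2) _ j] by (intro sum.cong) auto
  also have "\<dots> = (1 - p) * dist_at n p pi0 h j"
    using j by (simp add: if_distrib cong: if_cong)
  finally show ?thesis by (simp add: algebra_simps)
qed

lemma sum_lessThan_rotate:
  fixes n :: nat
  assumes "0 < n"
  shows "(\<Sum>j<n. g ((j + 1) mod n)) = (\<Sum>j<n. g j :: 'a::comm_monoid_add)"
proof -
  obtain m where m: "n = Suc m" using assms by (cases n) auto
  have "(\<Sum>j<Suc m. g ((j + 1) mod Suc m)) = (\<Sum>j<m. g (Suc j)) + g 0"
    by (simp add: sum.lessThan_Suc)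
  also have "\<dots> = (\<Sum>j<Suc m. g j)"
    by (subst sum.lessThan_Suc_shift) (rule add.commute)
  finally show ?thesis using m by simp
qed

lemma sum_cyclic_recurrence:
  fixes x y :: "nat \<Rightarrow> 'a::field"
  assumes "0 < n" and "a \<noteq> 1"
    and rec: "\<And>j. j < n \<Longrightarrow> y ((j + 1) mod n) - a * y j = (1 - a) * x j"
  shows "(\<Sum>j<n. y j) = (\<Sum>j<n. x j)"
proof -
  have "(1 - a) * (\<Sum>j<n. y j) = (\<Sum>j<n. y ((j + 1) mod n)) - a * (\<Sum>j<n. y j)"
    by (simp only: sum_lessThan_rotate[OF \<open>0 < n\<close>]) (simp add: algebra_simps)
  also have "\<dots> = (\<Sum>j<n. y ((j + 1) mod n) - a * y j)"
    by (simp only: sum_subtractf sum_distrib_left)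
  also have "\<dots> = (\<Sum>j<n. (1 - a) * x j)"
    using rec by (intro sum.cong) auto
  also have "\<dots> = (1 - a) * (\<Sum>j<n. x j)"
    by (simp add: sum_distrib_left)
  finally show ?thesis using \<open>a \<noteq> 1\<close> by simp
qed

definition dft_root :: "nat \<Rightarrow> complex" where
  "dft_root n = cis (2 * pi / real n)"

definition dft :: "nat \<Rightarrow> (nat \<Rightarrow> complex) \<Rightarrow> nat \<Rightarrow> complex" where
  "dft n f k = (\<Sum>j<n. f j * dft_root n ^ (j * k))"

lemma dft_root_power: "dft_root n ^ m = cis (2 * pi * real m / real n)"
  unfolding dft_root_def Complex.DeMoivre by (simp add: field_simps)

lemma norm_dft_root_power [simp]: "cmod (dft_root n ^ m) = 1"
  by (simp add: dft_root_power)

lemma dft_root_power_mod: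
  assumes "0 < n"
  shows "dft_root n ^ (m mod n) = dft_root n ^ m"
proof -
  have "dft_root n ^ n = 1" using assms by (simp add: dft_root_power)
  then show ?thesis
    by (metis (no_types) mult_div_mod_eq power_add power_mult power_one mult_1)
qed

lemma dft_rotate:
  assumes "0 < n"
  shows "dft_root n ^ k * (\<Sum>j<n. f ((j + 1) mod n) * dft_root n ^ (j * k)) = dft n f k"
proof -
  have rotate_root: "dft_root n ^ k * dft_root n ^ (j * k) = dft_root n ^ (((j + 1) mod n) * k)" for j
    by (simp only: power_mult dft_root_power_mod[OF assms]) (simp add: power_add power_mult_distrib)
  have "dft_root n ^ k * (\<Sum>j<n. f ((j + 1) mod n) * dft_root n ^ (j * k))
      = (\<Sum>j<n. f ((j + 1) mod n) * dft_root n ^ (((j + 1) mod n) * k))"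
    unfolding sum_distrib_left
    by (intro sum.cong refl) (simp only: mult.left_commute[of "dft_root n ^ k"] rotate_root)
  also have "\<dots> = dft n f k"
    unfolding dft_def by (rule sum_lessThan_rotate[OF assms])
  finally show ?thesis .
qed

lemma dft_cyclic_recurrence:
  assumes "0 < n" and rec: "\<And>j. j < n \<Longrightarrow> y ((j + 1) mod n) - a * y j = b * x j"
  shows "(1 - a * dft_root n ^ k) * dft n y k = b * dft_root n ^ k * dft n x k"
proof -
  have "(\<Sum>j<n. y ((j + 1) mod n) * dft_root n ^ (j * k)) - a * dft n y k
      = (\<Sum>j<n. (y ((j + 1) mod n) - a * y j) * dft_root n ^ (j * k))"
    unfolding dft_def by (simp add: sum_distrib_left sum_subtractf left_diff_distrib mult.assoc)
  also have "\<dots> = b * dft n x k"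
    unfolding dft_def sum_distrib_left using rec by (intro sum.cong) auto
  finally have "(\<Sum>j<n. y ((j + 1) mod n) * dft_root n ^ (j * k)) - a * dft n y k = b * dft n x k" .
  then have "dft_root n ^ k * ((\<Sum>j<n. y ((j + 1) mod n) * dft_root n ^ (j * k)) - a * dft n y k)
      = dft_root n ^ k * (b * dft n x k)"
    by (rule arg_cong)
  then show ?thesis
    unfolding right_diff_distrib dft_rotate[OF \<open>0 < n\<close>] by (simp add: algebra_simps)
qed

lemma dft_root_power_eq_1_iff:
  assumes "0 < n"
  shows "dft_root n ^ m = 1 \<longleftrightarrow> n dvd m"
proof -
  have "dft_root n ^ m = exp (2 * of_real pi * \<i> * of_nat m / of_nat n)"
    unfolding dft_root_power cis_conv_exp by (simp add: field_simps)
  then show ?thesis using complex_root_unity_eq_1[of n m] assms by simp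
qed

lemma cnj_dft_root_power:
  assumes "l \<le> n"
  shows "cnj (dft_root n ^ l) = dft_root n ^ (n - l)"
proof (cases "n = 0")
  case False
  have "2 * pi * real (n - l) / real n = 2 * pi + - (2 * pi * real l / real n)"
    using False assms by (simp add: of_nat_diff field_simps)
  then have "cis (- (2 * pi * real l / real n)) = cis (2 * pi * real (n - l) / real n)"
    by (simp only: cis_mult[symmetric]) simp
  then show ?thesis unfolding dft_root_power cis_cnj .
qed (use assms in simp)

lemma dft_root_orthogonal:
  assumes j: "j < n" and l: "l < n"
  shows "(\<Sum>k<n. dft_root n ^ (j * k) * cnj (dft_root n ^ (l * k))) = (if j = l then of_nat n else 0)"
proof -
  define z where "z = dft_root n ^ (j + (n - l))"
  have n: "0 < n" using j by simp
  have "dft_root n ^ (j * k) * cnj (dft_root n ^ (l * k)) = z ^ k" for k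
  proof -
    have "cnj (dft_root n ^ (l * k)) = (dft_root n ^ (n - l)) ^ k"
      using l by (metis complex_cnj_power power_mult cnj_dft_root_power less_imp_le)
    then show ?thesis by (simp add: z_def power_add power_mult power_mult_distrib)
  qed
  moreover have "z = 1 \<longleftrightarrow> j = l"
  proof -
    have "n dvd j + (n - l) \<longleftrightarrow> j + (n - l) = n"
      using j l by (cases "j < l") (auto simp: dvd_eq_mod_eq_0 le_mod_geq)
    then show ?thesis using j l unfolding z_def dft_root_power_eq_1_iff[OF n] by auto
  qed
  moreover have "z ^ n = 1"
    unfolding z_def power_mult[symmetric] dft_root_power_eq_1_iff[OF n] by simp
  ultimately show ?thesis by (simp add: sum_gp_strict)
qed

lemma dft_parseval:
  "(\<Sum>k<n. (cmod (dft n f k))\<^sup>2) = real n * (\<Sum>j<n. (cmod (f j))\<^sup>2)"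
proof -
  let ?e = "\<lambda>j l k. dft_root n ^ (j * k) * cnj (dft_root n ^ (l * k))"
  have "complex_of_real (\<Sum>k<n. (cmod (dft n f k))\<^sup>2) = (\<Sum>k<n. dft n f k * cnj (dft n f k))"
    by (simp only: of_real_sum complex_norm_square)
  also have "\<dots> = (\<Sum>k<n. \<Sum>j<n. \<Sum>l<n. f j * cnj (f l) * ?e j l k)"
    unfolding dft_def cnj_sum complex_cnj_mult sum_product by (simp only: mult_ac)
  also have "\<dots> = (\<Sum>j<n. \<Sum>k<n. \<Sum>l<n. f j * cnj (f l) * ?e j l k)"
    by (rule sum.swap)
  also have "\<dots> = (\<Sum>j<n. \<Sum>l<n. \<Sum>k<n. f j * cnj (f l) * ?e j l k)"
    by (intro sum.cong refl sum.swap)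
  also have "\<dots> = (\<Sum>j<n. \<Sum>l<n. f j * cnj (f l) * (\<Sum>k<n. ?e j l k))"
    by (simp only: sum_distrib_left)
  also have "\<dots> = (\<Sum>j<n. \<Sum>l<n. f j * cnj (f l) * (if j = l then of_nat n else 0))"
    by (intro sum.cong refl) (simp only: lessThan_iff dft_root_orthogonal)
  also have "\<dots> = (\<Sum>j<n. f j * cnj (f j) * of_nat n)"
    by (intro sum.cong refl) (simp add: if_distrib cong: if_cong)
  also have "\<dots> = (\<Sum>j<n. complex_of_real (real n * (cmod (f j))\<^sup>2))"
    by (intro sum.cong refl) (simp add: complex_norm_square[symmetric])
  also have "\<dots> = complex_of_real (real n * (\<Sum>j<n. (cmod (f j))\<^sup>2))"
    by (simp only: of_real_sum sum_distrib_left)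
  finally show ?thesis by (simp only: of_real_eq_iff)
qed

lemma cos_2pi_mult_div_le:
  assumes k: "0 < k" "k < n"
  shows "cos (2 * pi * real k / real n) \<le> cos (2 * pi / real n)"
proof -
  have half: "cos (2 * pi * real m / real n) \<le> cos (2 * pi / real n)" if "0 < m" "2 * m \<le> n" for m
  proof (rule cos_monotone_0_pi_le)
    have "2 * real m \<le> real n" using that by linarith
    then show "2 * pi * real m / real n \<le> pi"
      using k by (simp add: field_simps mult_left_mono)
    show "2 * pi / real n \<le> 2 * pi * real m / real n"
      using that by (simp add: divide_right_mono)
  qed simp
  show ?thesis
  proof (cases "2 * k \<le> n")
    case False
    have "2 * pi * real k / real n = 2 * pi - 2 * pi * real (n - k) / real n"
      using k by (simp add: of_nat_diff field_simps)
    then have "cos (2 * pi * real k / real n) = cos (2 * pi * real (n - k) / real n)"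
      by (simp add: cos_diff)
    then show ?thesis using half[of "n - k"] k False by simp
  qed (use half k in blast)
qed

lemma norm_one_minus_dft_root_power_squared:
  "(cmod (1 - complex_of_real p * dft_root n ^ k))\<^sup>2
     = 1 + p\<^sup>2 - 2 * p * cos (2 * pi * real k / real n)"
proof -
  let ?t = "2 * pi * real k / real n"
  have "(cmod (1 - complex_of_real p * dft_root n ^ k))\<^sup>2 = (1 - p * cos ?t)\<^sup>2 + (p * sin ?t)\<^sup>2"
    unfolding cmod_power2 dft_root_power by simp
  also have "\<dots> = 1 + p\<^sup>2 * ((sin ?t)\<^sup>2 + (cos ?t)\<^sup>2) - 2 * p * cos ?t"
    by algebra
  finally show ?thesis by simp
qed

lemma sq_one_minus_less_cos_gap:
  fixes p :: real
  assumes "2 \<le> n" and "0 < p"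
  shows "(1 - p)\<^sup>2 < 1 + p\<^sup>2 - 2 * p * cos (2 * pi / real n)"
proof -
  have "cos (2 * pi / real n) < cos 0"
    using assms by (intro cos_monotone_0_pi) (auto simp: field_simps)
  then have "0 < 2 * p * (1 - cos (2 * pi / real n))" using assms by simp
  then show ?thesis by (simp add: power2_eq_square algebra_simps)
qed

lemma cyclic_recurrence_contraction:
  fixes x y :: "nat \<Rightarrow> real"
  assumes n: "0 < n" and p: "0 \<le> p" "p \<noteq> 1" and mass: "(\<Sum>j<n. x j) = 0"
    and rec: "\<And>j. j < n \<Longrightarrow> y ((j + 1) mod n) - p * y j = (1 - p) * x j"
  shows "(1 + p\<^sup>2 - 2 * p * cos (2 * pi / real n)) * (\<Sum>j<n. (y j)\<^sup>2) \<le> (1 - p)\<^sup>2 * (\<Sum>j<n. (x j)\<^sup>2)"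
proof -
  define D where "D = 1 + p\<^sup>2 - 2 * p * cos (2 * pi / real n)"
  define X where "X = dft n (\<lambda>j. complex_of_real (x j))"
  define Y where "Y = dft n (\<lambda>j. complex_of_real (y j))"
  have complex_rec: "complex_of_real (y ((j + 1) mod n)) - complex_of_real p * complex_of_real (y j)
      = complex_of_real (1 - p) * complex_of_real (x j)" if "j < n" for j
    using arg_cong[OF rec[OF that], of complex_of_real] by simp
  have Y_rec: "(1 - complex_of_real p * dft_root n ^ k) * Y k = complex_of_real (1 - p) * dft_root n ^ k * X k"
    for k unfolding X_def Y_def using n complex_rec by (rule dft_cyclic_recurrence)
  have mode: "D * (cmod (Y k))\<^sup>2 \<le> (1 - p)\<^sup>2 * (cmod (X k))\<^sup>2" if "k < n" for k
  proof (cases "k = 0")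
    case True
    have "(\<Sum>j<n. y j) = 0" using sum_cyclic_recurrence[of n p y x, OF n p(2) rec] mass by simp
    then have "Y k = 0" using True by (simp add: Y_def dft_def flip: of_real_sum)
    then show ?thesis by simp
  next
    case False
    have "D \<le> (cmod (1 - complex_of_real p * dft_root n ^ k))\<^sup>2"
      unfolding D_def norm_one_minus_dft_root_power_squared
      using cos_2pi_mult_div_le[of k n] False that p by (simp add: mult_left_mono)
    moreover have "(cmod (1 - complex_of_real p * dft_root n ^ k))\<^sup>2 * (cmod (Y k))\<^sup>2
        = (1 - p)\<^sup>2 * (cmod (X k))\<^sup>2"
    proof -
      have "(cmod (complex_of_real (1 - p)))\<^sup>2 = (1 - p)\<^sup>2"
        by (simp only: norm_of_real power2_abs)
      then show ?thesis
        using arg_cong[OF Y_rec[of k], of "\<lambda>z. (cmod z)\<^sup>2"]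
        by (simp only: norm_mult power_mult_distrib norm_dft_root_power power_one mult_1_right)
    qed
    ultimately show ?thesis by (metis mult_right_mono zero_le_power2)
  qed
  have "real n * (D * (\<Sum>j<n. (y j)\<^sup>2)) = D * (\<Sum>k<n. (cmod (Y k))\<^sup>2)"
    unfolding Y_def dft_parseval by simp
  also have "\<dots> \<le> (1 - p)\<^sup>2 * (\<Sum>k<n. (cmod (X k))\<^sup>2)"
    unfolding sum_distrib_left using mode by (intro sum_mono) simp
  also have "\<dots> = real n * ((1 - p)\<^sup>2 * (\<Sum>j<n. (x j)\<^sup>2))"
    unfolding X_def dft_parseval by simp
  finally show ?thesis using n unfolding D_def by simp
qed

lemma sum_abs_le_sqrt_card_mult_sqrt_sum_squares:
  fixes f :: "'a \<Rightarrow> real"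
  shows "(\<Sum>i\<in>I. \<bar>f i\<bar>) \<le> sqrt (real (card I)) * sqrt (\<Sum>i\<in>I. (f i)\<^sup>2)"
proof -
  have "(\<Sum>i\<in>I. \<bar>f i\<bar>)\<^sup>2 \<le> (\<Sum>i\<in>I. (f i)\<^sup>2) * real (card I)"
    using sum_squared_le_sum_of_squares[of "\<lambda>i. \<bar>f i\<bar>" I] by simp
  then show ?thesis by (simp add: real_le_rsqrt real_sqrt_mult[symmetric] mult.commute)
qed

lemma sum_squares_diff_uniform_le_one:
  assumes nonneg: "\<forall>i<n. 0 \<le> q i" and total: "(\<Sum>i<n. q i) = 1"
  shows "(\<Sum>j<n. (q j - 1 / real n)\<^sup>2) \<le> 1"
proof -
  have n: "0 < n" using total by (cases n) auto
  have "(\<Sum>j<n. (q j - 1 / real n)\<^sup>2)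
      = (\<Sum>j<n. (q j)\<^sup>2) - 2 / real n * (\<Sum>j<n. q j) + real n * (1 / real n)\<^sup>2"
    by (simp add: power2_diff sum.distrib sum_subtractf sum_distrib_left sum_divide_distrib algebra_simps)
  also have "\<dots> = (\<Sum>j<n. (q j)\<^sup>2) - 1 / real n"
    using total n by (simp add: power2_eq_square field_simps)
  also have "\<dots> \<le> (\<Sum>j<n. q j)"
  proof -
    have "(q j)\<^sup>2 \<le> q j" if "j < n" for j
    proof -
      have "q j \<le> (\<Sum>i<n. q i)" using that nonneg by (intro member_le_sum) auto
      then show ?thesis using that nonneg total by (simp add: power2_eq_square mult_left_le)
    qed
    then have "(\<Sum>j<n. (q j)\<^sup>2) \<le> (\<Sum>j<n. q j)" by (intro sum_mono) simp
    moreover have "0 \<le> 1 / real n" by simp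
    ultimately show ?thesis by linarith
  qed
  finally show ?thesis using total by simp
qed

definition abs_lambda1 :: "nat \<Rightarrow> real \<Rightarrow> real" where
  "abs_lambda1 n p = (1 - p) / sqrt (1 + p\<^sup>2 - 2 * p * cos (2 * pi / real n))"

lemma abs_lambda1_bounds:
  assumes "2 \<le> n" and "0 < p" and "p < 1"
  shows "0 \<le> abs_lambda1 n p" and "abs_lambda1 n p < 1"
    and "(1 + p\<^sup>2 - 2 * p * cos (2 * pi / real n)) * (abs_lambda1 n p)\<^sup>2 = (1 - p)\<^sup>2"
proof -
  define D where "D = 1 + p\<^sup>2 - 2 * p * cos (2 * pi / real n)"
  have gap: "(1 - p)\<^sup>2 < D"
    unfolding D_def using assms(1,2) by (rule sq_one_minus_less_cos_gap)
  then have "0 < D" by (metis zero_le_power2 le_less_trans)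
  then show "0 \<le> abs_lambda1 n p" "abs_lambda1 n p < 1" "D * (abs_lambda1 n p)\<^sup>2 = (1 - p)\<^sup>2"
    using gap assms(3) by (auto simp: abs_lambda1_def D_def[symmetric] power_divide real_less_rsqrt)
qed

lemma sum_dist_at_deviation:
  assumes "0 < n" and "0 \<le> p" and "p < 1" and "(\<Sum>i<n. pi0 i) = 1"
  shows "(\<Sum>j<n. dist_at n p pi0 h j - 1 / real n) = 0"
proof (induction h)
  case 0
  show ?case using assms(1,4) by (simp add: sum_subtractf)
next
  case (Suc h)
  have "p ^ n \<noteq> 1" using assms(1-3) by (simp add: power_less_one_iff less_imp_neq)
  then show ?case
    using sum_cyclic_recurrence[of n p "\<lambda>j. dist_at n p pi0 (Suc h) j - 1 / real n"
        "\<lambda>j. dist_at n p pi0 h j - 1 / real n"] dist_at_shift assms(1,3) Suc by simp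
qed

lemma sum_squares_dist_at_deviation_le:
  assumes "2 \<le> n" and "0 < p" and "p < 1"
    and "\<forall>i<n. 0 \<le> pi0 i" and "(\<Sum>i<n. pi0 i) = 1"
  shows "(\<Sum>j<n. (dist_at n p pi0 h j - 1 / real n)\<^sup>2) \<le> (abs_lambda1 n p ^ h)\<^sup>2"
proof (induction h)
  case 0
  show ?case using sum_squares_diff_uniform_le_one[OF assms(4,5)] by simp
next
  case (Suc h)
  define D where "D = 1 + p\<^sup>2 - 2 * p * cos (2 * pi / real n)"
  define S where "S h = (\<Sum>j<n. (dist_at n p pi0 h j - 1 / real n)\<^sup>2)" for h
  have n: "0 < n" using assms(1) by simp
  have "p ^ n \<noteq> 1" using assms(2,3) n by (simp add: power_less_one_iff less_imp_neq)
  then have "D * S (Suc h) \<le> (1 - p)\<^sup>2 * S h"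
    unfolding D_def S_def using assms n
    by (intro cyclic_recurrence_contraction sum_dist_at_deviation dist_at_shift) auto
  also have "\<dots> \<le> (1 - p)\<^sup>2 * (abs_lambda1 n p ^ h)\<^sup>2"
    using Suc unfolding S_def by (intro mult_left_mono) simp_all
  also have "\<dots> = D * (abs_lambda1 n p ^ Suc h)\<^sup>2"
    unfolding D_def abs_lambda1_bounds(3)[OF assms(1-3), symmetric] by (simp add: power_mult_distrib)
  finally show ?case
    using sq_one_minus_less_cos_gap[OF assms(1,2)] zero_le_power2[of "1 - p"]
    unfolding D_def S_def by (simp add: mult_le_cancel_left)
qed

lemma sum_abs_dist_at_deviation_le:
  assumes "2 \<le> n" and "0 < p" and "p < 1"
    and "\<forall>i<n. 0 \<le> pi0 i" and "(\<Sum>i<n. pi0 i) = 1"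
  shows "(\<Sum>j<n. \<bar>dist_at n p pi0 h j - 1 / real n\<bar>) \<le> sqrt (real n) * abs_lambda1 n p ^ h"
proof -
  have "sqrt (\<Sum>j<n. (dist_at n p pi0 h j - 1 / real n)\<^sup>2) \<le> sqrt ((abs_lambda1 n p ^ h)\<^sup>2)"
    using sum_squares_dist_at_deviation_le[OF assms] by (rule real_sqrt_le_mono)
  then have "sqrt (\<Sum>j<n. (dist_at n p pi0 h j - 1 / real n)\<^sup>2) \<le> abs_lambda1 n p ^ h"
    using abs_lambda1_bounds(1)[OF assms(1-3)] by simp
  then show ?thesis
    using sum_abs_le_sqrt_card_mult_sqrt_sum_squares[of "\<lambda>j. dist_at n p pi0 h j - 1 / real n" "{..<n}"]
    by (simp add: order_trans mult_left_mono)
qed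

theorem lemma3:
  fixes n :: nat and p :: real and pi0 :: "nat \<Rightarrow> real"
  assumes "n \<ge> 2" and "0 < p" and "p < 1"
    and "\<forall>i<n. pi0 i \<ge> 0" and "(\<Sum>i<n. pi0 i) = 1"
  shows "(\<forall>j<n. (\<lambda>h. dist_at n p pi0 h j) \<longlonglongrightarrow> 1 / real n)
       \<and> (\<forall>h. (\<Sum>j<n. \<bar>dist_at n p pi0 h j - 1 / real n\<bar>)
               \<le> sqrt (real n) * ((1 - p) / sqrt (1 + p\<^sup>2 - 2 * p * cos (2 * pi / real n))) ^ h)"
proof -
  note l1 = sum_abs_dist_at_deviation_le[OF assms]
  have "(\<lambda>h. dist_at n p pi0 h j - 1 / real n) \<longlonglongrightarrow> 0" if "j < n" for j
  proof (rule Lim_null_comparison)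
    show "\<forall>\<^sub>F h in sequentially. norm (dist_at n p pi0 h j - 1 / real n) \<le> sqrt (real n) * abs_lambda1 n p ^ h"
    proof (intro always_eventually allI)
      fix h
      have "\<bar>dist_at n p pi0 h j - 1 / real n\<bar> \<le> (\<Sum>j<n. \<bar>dist_at n p pi0 h j - 1 / real n\<bar>)"
        using that by (intro member_le_sum) auto
      then show "norm (dist_at n p pi0 h j - 1 / real n) \<le> sqrt (real n) * abs_lambda1 n p ^ h"
        using l1[of h] by simp
    qed
    show "(\<lambda>h. sqrt (real n) * abs_lambda1 n p ^ h) \<longlonglongrightarrow> 0"
      using abs_lambda1_bounds[OF assms(1-3)] by (intro tendsto_mult_right_zero LIMSEQ_power_zero) simp
  qed
  then show ?thesis
    using l1 unfolding abs_lambda1_def by (simp add: LIM_zero_iff)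
qed

end
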